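(* Let $X=\{x_1,\dots,x_M\}\subset\mathbb{R}^n$ be finite and $\phi_1,\dots,\phi_N$ real functions on $X$ such that the matrix $V$, $V_{i,j}=\phi_j(x_i)$, has rank $N$. Then: (i) $w^*\in\mathbb{R}^M_{\geq0}$ solves Problem 1 if and only if it solves Problem 2; (ii) $z^*\in\mathbb{R}^M$ solves Problem 3 if and only if $w^*:=(z_1^{*2},\dots,z_M^{*2})$ solves Problem 1. In either case, $w^*$ is a D-optimal design for $\Phi=\{\phi_1,\dots,\phi_N\}$ on $X$ (supported on $\{x_i: w^*_i>0\}$).
   Context: Let $G(w)=V^t\operatorname{diag}(w)V$ for $w\in\mathbb{R}^M$. Problem 1: find $w^*\in\mathbb{R}^M_{\geq0}$ maximizing $\det G(w)$ over $\{w\in\mathbb{R}^M_{\geq0}:\|w\|_1=1\}$; a solution is called a D-optimal design. Problem 2: find $w^*\in\mathbb{R}^M_{\geq0}$ minimizing $E(w)=-\frac1N\log\det G(w)+\|w\|_1$ over $\mathbb{R}^M_{\geq0}$ (with $E=+\infty$ where $\det G(w)=0$). Problem 3: find $z^*\in\mathbb{R}^M$ minimizing $F(z)=E((z_1^2,\dots,z_M^2))=-\frac1N\log\det G((z_1^2,\dots,z_M^2))+\|z\|_2^2$ over $\mathbb{R}^M$ (with $F=+\infty$ where the determinant vanishes). *)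

theory Defs
  imports "HOL-Analysis.Analysis"
begin

text \<open>Index type 'm enumerates the points x_1..x_M (M = CARD('m)), index type 'n the
functions phi_1..phi_N (N = CARD('n)). A vector w in R^M is a real^'m.\<close>

definition diagm :: "real^'m \<Rightarrow> real^'m^'m" where
  "diagm w = (\<chi> i j. if i = j then w $ i else 0)"

definition Gmat :: "real^'n^'m \<Rightarrow> real^'m \<Rightarrow> real^'n^'n" where
  "Gmat V w = transpose V ** diagm w ** V"

definition nonneg_vec :: "real^'m \<Rightarrow> bool" where
  "nonneg_vec w \<longleftrightarrow> (\<forall>i. 0 \<le> w $ i)"

definition norm1 :: "real^'m \<Rightarrow> real" where
  "norm1 w = (\<Sum>i\<in>UNIV. \<bar>w $ i\<bar>)"

definition solves_P1 :: "real^'n^'m \<Rightarrow> real^'m \<Rightarrow> bool" where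
  "solves_P1 V w \<longleftrightarrow> nonneg_vec w \<and> norm1 w = 1 \<and>
     (\<forall>v. nonneg_vec v \<and> norm1 v = 1 \<longrightarrow> det (Gmat V v) \<le> det (Gmat V w))"

definition Efun :: "real^'n^'m \<Rightarrow> real^'m \<Rightarrow> ereal" where
  "Efun V w = (if det (Gmat V w) = 0 then \<infinity>
     else ereal (- (1 / real CARD('n)) * ln (det (Gmat V w)) + norm1 w))"

definition solves_P2 :: "real^'n^'m \<Rightarrow> real^'m \<Rightarrow> bool" where
  "solves_P2 V w \<longleftrightarrow> nonneg_vec w \<and> (\<forall>v. nonneg_vec v \<longrightarrow> Efun V w \<le> Efun V v)"

definition sqvec :: "real^'m \<Rightarrow> real^'m" where
  "sqvec z = (\<chi> i. (z $ i)^2)"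

definition Ffun :: "real^'n^'m \<Rightarrow> real^'m \<Rightarrow> ereal" where
  "Ffun V z = Efun V (sqvec z)"

definition solves_P3 :: "real^'n^'m \<Rightarrow> real^'m \<Rightarrow> bool" where
  "solves_P3 V z \<longleftrightarrow> (\<forall>y. Ffun V z \<le> Ffun V y)"

end

theory Submission
  imports Defs
begin

text \<open>G(w) is the Gram matrix of the quadratic form y \<mapsto> \<Sum>k. w_k (V y)_k^2, so det G(w) \<ge> 0
  for w \<ge> 0, and det G(w) > 0 for w > 0 when V has full column rank. Writing a nonnegative w
  with det G(w) > 0 as w = s u with s > 0 and |u|_1 = 1, homogeneity of the determinant gives
  E(s u) = E(u) + (s - 1 - ln s), where s - 1 - ln s \<ge> 0 with equality only at s = 1. Hence
  every minimiser of E lies on the simplex, and there E is a decreasing function of det G;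
  this gives (i). Since z \<mapsto> (z_1^2, \<dots>, z_M^2) maps \<real>^M onto the nonnegative orthant,
  (ii) follows from (i).\<close>

lemma det_scaleR_matrix:
  fixes A :: "real^'n::finite^'n"
  shows "det (c *\<^sub>R A) = c ^ CARD('n) * det A"
  unfolding det_def by (simp add: prod.distrib sum_distrib_left mult.left_commute)

lemma det_ne_0_iff_ker_trivial:
  fixes A :: "real^'n::finite^'n"
  shows "det A \<noteq> 0 \<longleftrightarrow> (\<forall>x. A *v x = 0 \<longrightarrow> x = 0)"
  by (metis det_eq_0_rank matrix_nonfull_linear_equations_eq less_rank_noninjective full_rank_injective nless_le)

lemma det_psd_homotopy_ne_0:
  fixes A :: "real^'n::finite^'n"
  assumes psd: "\<And>x. 0 \<le> x \<bullet> (A *v x)" and t: "0 \<le> t" "t < 1"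
  shows "det ((1 - t) *\<^sub>R mat 1 + t *\<^sub>R A) \<noteq> 0"
  unfolding det_ne_0_iff_ker_trivial
proof (intro allI impI)
  fix x
  assume "((1 - t) *\<^sub>R mat 1 + t *\<^sub>R A) *v x = 0"
  then have "x \<bullet> ((1 - t) *\<^sub>R x + t *\<^sub>R (A *v x)) = 0"
    by (simp add: matrix_vector_mult_add_rdistrib scaleR_matrix_vector_assoc[symmetric])
  then have "(1 - t) * (x \<bullet> x) + t * (x \<bullet> (A *v x)) = 0"
    by (simp add: inner_add_right)
  moreover have "0 \<le> t * (x \<bullet> (A *v x))"
    using psd t by simp
  ultimately have "(1 - t) * (x \<bullet> x) = 0"
    using t by (smt (verit) inner_ge_zero mult_nonneg_nonneg)
  then show "x = 0"
    using t by simp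
qed

lemma det_nonneg_if_psd:
  fixes A :: "real^'n::finite^'n"
  assumes psd: "\<And>x. 0 \<le> x \<bullet> (A *v x)"
  shows "0 \<le> det A"
proof (rule ccontr)
  assume neg: "\<not> 0 \<le> det A"
  define f where "f t = det ((1 - t) *\<^sub>R mat 1 + t *\<^sub>R A)" for t
  have "continuous_on {0..1} f"
    unfolding f_def det_def by (intro continuous_intros)
  moreover have "f 0 = 1" "f 1 = det A"
    by (simp_all add: f_def)
  ultimately obtain t where "0 \<le> t" "t \<le> 1" "f t = 0"
    using IVT2'[of f 1 0 0] neg by auto
  moreover have "t \<noteq> 1"
    using \<open>f t = 0\<close> \<open>f 1 = det A\<close> neg by auto
  ultimately show False
    using det_psd_homotopy_ne_0[OF psd] unfolding f_def by simp
qed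

lemma Gmat_nth: "Gmat V w $ i $ j = (\<Sum>k\<in>UNIV. V $ k $ i * w $ k * V $ k $ j)"
  unfolding Gmat_def diagm_def matrix_matrix_mult_def transpose_def
  by (simp add: sum_distrib_right if_distrib mult.assoc cong: if_cong)

lemma inner_Gmat_mult: "y \<bullet> (Gmat V w *v y) = (\<Sum>k\<in>UNIV. w $ k * ((V *v y) $ k)\<^sup>2)"
proof -
  have "y \<bullet> (Gmat V w *v y) =
      (\<Sum>i\<in>UNIV. \<Sum>j\<in>UNIV. \<Sum>k\<in>UNIV. y $ i * (V $ k $ i * w $ k * V $ k $ j) * y $ j)"
    unfolding inner_vec_def matrix_vector_mult_def Gmat_nth
    by (simp add: sum_distrib_left sum_distrib_right mult.assoc)
  also have "\<dots> = (\<Sum>i\<in>UNIV. \<Sum>k\<in>UNIV. \<Sum>j\<in>UNIV. y $ i * (V $ k $ i * w $ k * V $ k $ j) * y $ j)"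
    by (rule sum.cong[OF refl], rule sum.swap)
  also have "\<dots> = (\<Sum>k\<in>UNIV. \<Sum>i\<in>UNIV. \<Sum>j\<in>UNIV. y $ i * (V $ k $ i * w $ k * V $ k $ j) * y $ j)"
    by (rule sum.swap)
  also have "\<dots> = (\<Sum>k\<in>UNIV. w $ k * ((\<Sum>i\<in>UNIV. V $ k $ i * y $ i) * (\<Sum>j\<in>UNIV. V $ k $ j * y $ j)))"
    by (simp add: sum_product sum_distrib_left mult_ac)
  finally show ?thesis
    by (simp add: matrix_vector_mult_def power2_eq_square)
qed

lemma Gmat_scaleR: "Gmat V (c *\<^sub>R w) = c *\<^sub>R Gmat V w"
  by (simp add: vec_eq_iff Gmat_nth sum_distrib_left mult_ac)

lemma det_Gmat_nonneg: "nonneg_vec w \<Longrightarrow> 0 \<le> det (Gmat V w)"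
  by (rule det_nonneg_if_psd) (auto simp: inner_Gmat_mult nonneg_vec_def intro!: sum_nonneg)

lemma det_Gmat_pos:
  fixes V :: "real^'n::finite^'m::finite"
  assumes "inj ((*v) V)" and pos: "\<And>k. 0 < w $ k"
  shows "0 < det (Gmat V w)"
proof -
  have "det (Gmat V w) \<noteq> 0"
    unfolding det_ne_0_iff_ker_trivial
  proof (intro allI impI)
    fix y
    assume "Gmat V w *v y = 0"
    then have "(\<Sum>k\<in>UNIV. w $ k * ((V *v y) $ k)\<^sup>2) = 0"
      using inner_Gmat_mult[of y V w] by simp
    moreover have "0 \<le> w $ k * ((V *v y) $ k)\<^sup>2" for k
      using pos[of k] by simp
    ultimately have "\<forall>k. w $ k * ((V *v y) $ k)\<^sup>2 = 0"
      by (simp add: sum_nonneg_eq_0_iff)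
    then have "V *v y = 0"
      using pos by (simp add: vec_eq_iff) (metis less_irrefl)
    then show "y = 0"
      using assms(1) by (metis injD matrix_vector_mult_0_right)
  qed
  moreover have "0 \<le> det (Gmat V w)"
    using pos by (intro det_Gmat_nonneg) (simp add: nonneg_vec_def less_imp_le)
  ultimately show ?thesis
    by simp
qed

lemma det_Gmat_zero:
  fixes V :: "real^'n::finite^'m::finite"
  shows "det (Gmat V 0) = 0"
  using Gmat_scaleR[of V 0 0] det_scaleR_matrix[of 0 "Gmat V 0"]
  by (simp add: power_0_left)

lemma norm1_scaleR: "0 \<le> c \<Longrightarrow> norm1 (c *\<^sub>R w) = c * norm1 w"
  unfolding norm1_def by (simp add: abs_mult sum_distrib_left)

lemma norm1_eq_0_iff: "norm1 w = 0 \<longleftrightarrow> w = 0"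
  unfolding norm1_def by (simp add: sum_nonneg_eq_0_iff vec_eq_iff)

lemma nonneg_vec_scaleR: "0 \<le> c \<Longrightarrow> nonneg_vec w \<Longrightarrow> nonneg_vec (c *\<^sub>R w)"
  unfolding nonneg_vec_def by simp

lemma nonneg_vec_normalize:
  fixes V :: "real^'n::finite^'m::finite"
  assumes "nonneg_vec v" "0 < det (Gmat V v)"
  obtains s u where "0 < s" "v = s *\<^sub>R u" "nonneg_vec u" "norm1 u = 1" "0 < det (Gmat V u)"
proof
  have "v \<noteq> 0"
    using assms(2) det_Gmat_zero[of V] by auto
  then show s: "0 < norm1 v"
    using norm1_eq_0_iff[of v] by (simp add: norm1_def less_le sum_nonneg)
  show "v = norm1 v *\<^sub>R (inverse (norm1 v) *\<^sub>R v)"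
    using s by simp
  show "nonneg_vec (inverse (norm1 v) *\<^sub>R v)" "norm1 (inverse (norm1 v) *\<^sub>R v) = 1"
    using s assms(1) by (simp_all add: nonneg_vec_scaleR norm1_scaleR)
  show "0 < det (Gmat V (inverse (norm1 v) *\<^sub>R v))"
    using s assms(2) by (simp add: Gmat_scaleR det_scaleR_matrix)
qed

lemma Efun_eq_on_simplex:
  fixes V :: "real^'n::finite^'m::finite"
  shows "0 < det (Gmat V u) \<Longrightarrow> norm1 u = 1 \<Longrightarrow>
    Efun V u = ereal (- ln (det (Gmat V u)) / real CARD('n) + 1)"
  by (simp add: Efun_def)

lemma Efun_scaleR:
  fixes V :: "real^'n::finite^'m::finite"
  assumes "0 < s" "0 < det (Gmat V u)" "norm1 u = 1"
  shows "Efun V (s *\<^sub>R u) = Efun V u + ereal (s - 1 - ln s)"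
proof -
  have det: "det (Gmat V (s *\<^sub>R u)) = s ^ CARD('n) * det (Gmat V u)"
    by (simp add: Gmat_scaleR det_scaleR_matrix)
  then have "ln (det (Gmat V (s *\<^sub>R u))) = real CARD('n) * ln s + ln (det (Gmat V u))"
    using assms by (simp add: ln_mult ln_realpow)
  then show ?thesis
    using assms det unfolding Efun_def by (simp add: norm1_scaleR field_simps)
qed

lemma Efun_le_iff_det_ge:
  fixes V :: "real^'n::finite^'m::finite"
  assumes "0 < det (Gmat V u)" "norm1 u = 1" "0 < det (Gmat V v)" "norm1 v = 1"
  shows "Efun V u \<le> Efun V v \<longleftrightarrow> det (Gmat V v) \<le> det (Gmat V u)"
  using assms by (simp add: Efun_eq_on_simplex divide_le_cancel)

lemma solves_P1_imp_solves_P2: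
  fixes V :: "real^'n::finite^'m::finite"
  assumes "nonneg_vec v\<^sub>0" "0 < det (Gmat V v\<^sub>0)" and P1: "solves_P1 V w"
  shows "solves_P2 V w"
proof -
  have w: "nonneg_vec w" "norm1 w = 1"
    and w_max: "\<And>u. nonneg_vec u \<Longrightarrow> norm1 u = 1 \<Longrightarrow> det (Gmat V u) \<le> det (Gmat V w)"
    using P1 unfolding solves_P1_def by auto
  obtain u\<^sub>0 where "nonneg_vec u\<^sub>0" "norm1 u\<^sub>0 = 1" "0 < det (Gmat V u\<^sub>0)"
    using nonneg_vec_normalize[OF assms(1,2)] by blast
  then have det_w: "0 < det (Gmat V w)"
    using w_max[of u\<^sub>0] by simp
  have "Efun V w \<le> Efun V v" if v: "nonneg_vec v" for v
  proof (cases "det (Gmat V v) = 0")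
    case True
    then show ?thesis
      by (simp add: Efun_def)
  next
    case False
    then have "0 < det (Gmat V v)"
      using det_Gmat_nonneg[OF v, of V] by simp
    then obtain s u where su: "0 < s" "v = s *\<^sub>R u" "nonneg_vec u" "norm1 u = 1" "0 < det (Gmat V u)"
      using nonneg_vec_normalize[OF v] by blast
    have "Efun V w \<le> Efun V u"
      using Efun_le_iff_det_ge[OF det_w w(2) su(5,4)] w_max su(3,4) by simp
    also have "\<dots> \<le> Efun V u + ereal (s - 1 - ln s)"
      using ln_le_minus_one[OF su(1)] Efun_eq_on_simplex[OF su(5,4)] by simp
    finally show ?thesis
      using Efun_scaleR[OF su(1,5,4)] su(2) by simp
  qed
  then show ?thesis
    using w unfolding solves_P2_def by simp
qed

lemma solves_P2_imp_solves_P1: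
  fixes V :: "real^'n::finite^'m::finite"
  assumes "nonneg_vec v\<^sub>0" "0 < det (Gmat V v\<^sub>0)" and P2: "solves_P2 V w"
  shows "solves_P1 V w"
proof -
  have w: "nonneg_vec w" and w_min: "\<And>v. nonneg_vec v \<Longrightarrow> Efun V w \<le> Efun V v"
    using P2 unfolding solves_P2_def by auto
  have "det (Gmat V w) \<noteq> 0"
    using w_min[OF assms(1)] assms(2) by (auto simp: Efun_def split: if_splits)
  then have "0 < det (Gmat V w)"
    using det_Gmat_nonneg[OF w, of V] by simp
  then obtain s u where su: "0 < s" "w = s *\<^sub>R u" "nonneg_vec u" "norm1 u = 1" "0 < det (Gmat V u)"
    using nonneg_vec_normalize[OF w] by blast
  have "Efun V u + ereal (s - 1 - ln s) \<le> Efun V u"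
    using w_min[OF su(3)] Efun_scaleR[OF su(1,5,4)] su(2) by simp
  then have "s - 1 - ln s \<le> 0"
    using Efun_eq_on_simplex[OF su(5,4)] by simp
  then have "s = 1"
    using ln_le_minus_one[OF su(1)] ln_eq_minus_one[OF su(1)] by simp
  with su have u: "w = u"
    by simp
  have "det (Gmat V v) \<le> det (Gmat V w)" if v: "nonneg_vec v" "norm1 v = 1" for v
  proof (cases "det (Gmat V v) = 0")
    case True
    then show ?thesis
      using su(5) u by simp
  next
    case False
    then have "0 < det (Gmat V v)"
      using det_Gmat_nonneg[OF v(1), of V] by simp
    then show ?thesis
      using Efun_le_iff_det_ge[OF su(5,4) _ v(2)] w_min[OF v(1)] u by simp
  qed
  then show ?thesis
    using w su u unfolding solves_P1_def by simp
qed

lemma sqvec_sqrt: "nonneg_vec v \<Longrightarrow> sqvec (\<chi> i. sqrt (v $ i)) = v"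
  by (simp add: sqvec_def vec_eq_iff nonneg_vec_def)

lemma solves_P3_iff_solves_P2_sqvec: "solves_P3 V z \<longleftrightarrow> solves_P2 V (sqvec z)"
proof -
  have "nonneg_vec (sqvec y)" for y
    by (simp add: nonneg_vec_def sqvec_def)
  then show ?thesis
    unfolding solves_P3_def solves_P2_def Ffun_def by (metis sqvec_sqrt)
qed

theorem mainTheorem2:
  fixes x :: "'m::finite \<Rightarrow> real^'d"
    and \<phi> :: "'n::finite \<Rightarrow> real^'d \<Rightarrow> real"
    and V :: "real^'n^'m"
  assumes "inj x"
    and "V = (\<chi> i j. \<phi> j (x i))"
    and "rank V = CARD('n)"
  shows "(\<forall>w. solves_P1 V w \<longleftrightarrow> solves_P2 V w)
       \<and> (\<forall>z. solves_P3 V z \<longleftrightarrow> solves_P1 V (sqvec z))"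
proof -
  define v\<^sub>0 :: "real^'m" where "v\<^sub>0 = (\<chi> i. 1)"
  have v\<^sub>0: "nonneg_vec v\<^sub>0" "0 < det (Gmat V v\<^sub>0)"
    using det_Gmat_pos[of V v\<^sub>0] assms(3) full_rank_injective[of V]
    by (simp_all add: v\<^sub>0_def nonneg_vec_def)
  have "solves_P1 V w \<longleftrightarrow> solves_P2 V w" for w
    using solves_P1_imp_solves_P2[OF v\<^sub>0] solves_P2_imp_solves_P1[OF v\<^sub>0] by blast
  then show ?thesis
    using solves_P3_iff_solves_P2_sqvec by blast
qed

end
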